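(* Run WSU-UX with $K=2$ and any valid $(\eta,\gamma)$ on the two-phase loss sequence. Let $t>T_1$ be a round with $2^{-m}\le\pi_{t,1}\le 2^{-(m-1)}$ for some positive integer $m$. If arm 2 is pulled at least $k=\frac{2}{\eta}m$ times in rounds $t,t+1,\dots,T$, and $t'$ denotes the round immediately after the $\lceil k\rceil$-th such pull, then $\pi_{t',1}\ge\frac14$.
   Context: WSU-UX. Fix integers $K\ge 2$ and $T\ge 1$ and hyperparameters $\eta,\gamma$. The pair $(\eta,\gamma)$ is called valid if $\eta,\gamma\in(0,1/2)$ and $\eta K/\gamma\le 1/2$. Given a fixed loss sequence $\ell_t\in[0,1]^K$, WSU-UX sets $\pi_{1,i}=1/K$ and in each round $t$: forms $\tilde\pi_{t,i}=(1-\gamma)\pi_{t,i}+\gamma/K$; draws $I_t$ with $\Pr(I_t=i\mid\mathcal F_{t-1})=\tilde\pi_{t,i}$; sets $\hat\ell_{t,i}=\ell_{t,i}\mathbf 1[I_t=i]/\tilde\pi_{t,i}$; and updates $\pi_{t+1,i}=\pi_{t,i}\bigl(1-\eta(\hat\ell_{t,i}-\sum_{j}\pi_{t,j}\hat\ell_{t,j})\bigr)$; $\mathcal F_t$ is the history generated by $I_1,\dots,I_t$. Two-phase loss sequence ($K=2$, $T$ a multiple of $100$, $T_1=T/100$): $\ell_{t,1}=1,\ell_{t,2}=0$ for $1\le t\le T_1$ and $\ell_{t,1}=0,\ell_{t,2}=1$ for $T_1<t\le T$. *)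

theory Defs
  imports Complex_Main
begin

text \<open>Arms are indexed by 1..K, rounds by 1,2,...  A realisation of the random
arm choices is a function I :: nat \<Rightarrow> nat (I t = arm pulled in round t).\<close>

definition valid_params :: "nat \<Rightarrow> real \<Rightarrow> real \<Rightarrow> bool" where
  "valid_params K \<eta> \<gamma> \<longleftrightarrow> 0 < \<eta> \<and> \<eta> < 1/2 \<and> 0 < \<gamma> \<and> \<gamma> < 1/2 \<and> \<eta> * real K / \<gamma> \<le> 1/2"

definition wsu_mix :: "nat \<Rightarrow> real \<Rightarrow> (nat \<Rightarrow> real) \<Rightarrow> nat \<Rightarrow> real" where
  "wsu_mix K \<gamma> p j = (1 - \<gamma>) * p j + \<gamma> / real K"

definition wsu_lhat :: "nat \<Rightarrow> real \<Rightarrow> (nat \<Rightarrow> nat \<Rightarrow> real) \<Rightarrow> nat \<Rightarrow> nat \<Rightarrow> (nat \<Rightarrow> real) \<Rightarrow> nat \<Rightarrow> real" where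
  "wsu_lhat K \<gamma> L t It p j = (if j = It then L t j / wsu_mix K \<gamma> p j else 0)"

definition wsu_step :: "nat \<Rightarrow> real \<Rightarrow> real \<Rightarrow> (nat \<Rightarrow> nat \<Rightarrow> real) \<Rightarrow> nat \<Rightarrow> nat \<Rightarrow> (nat \<Rightarrow> real) \<Rightarrow> nat \<Rightarrow> real" where
  "wsu_step K \<eta> \<gamma> L t It p i =
     p i * (1 - \<eta> * (wsu_lhat K \<gamma> L t It p i - (\<Sum>j = 1..K. p j * wsu_lhat K \<gamma> L t It p j)))"

text \<open>wsu_w n = \<pi>_{n+1}; the update from round n+1 to n+2 uses loss L_{n+1} and arm I_{n+1}.\<close>
primrec wsu_w :: "nat \<Rightarrow> real \<Rightarrow> real \<Rightarrow> (nat \<Rightarrow> nat \<Rightarrow> real) \<Rightarrow> (nat \<Rightarrow> nat) \<Rightarrow> nat \<Rightarrow> nat \<Rightarrow> real" where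
  "wsu_w K \<eta> \<gamma> L I 0 = (\<lambda>i. 1 / real K)"
| "wsu_w K \<eta> \<gamma> L I (Suc n) = wsu_step K \<eta> \<gamma> L (Suc n) (I (Suc n)) (wsu_w K \<eta> \<gamma> L I n)"

text \<open>wsu_pi K \<eta> \<gamma> L I t i = \<pi>_{t,i} for rounds t \<ge> 1.\<close>
definition wsu_pi :: "nat \<Rightarrow> real \<Rightarrow> real \<Rightarrow> (nat \<Rightarrow> nat \<Rightarrow> real) \<Rightarrow> (nat \<Rightarrow> nat) \<Rightarrow> nat \<Rightarrow> nat \<Rightarrow> real" where
  "wsu_pi K \<eta> \<gamma> L I t = wsu_w K \<eta> \<gamma> L I (t - 1)"

text \<open>Two-phase loss sequence (K = 2), T_1 = T div 100.\<close>
definition two_phase_loss :: "nat \<Rightarrow> nat \<Rightarrow> nat \<Rightarrow> real" where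
  "two_phase_loss T t i =
     (if t \<le> T div 100 then (if i = 1 then 1 else 0) else (if i = 2 then 1 else 0))"

end

theory Submission
  imports Defs
begin

text \<open>The weights stay in the open simplex, since each arm's multiplicative factor is at least
  \<open>1 - \<eta> \<cdot> K/\<gamma> \<ge> 1/2\<close>. In the second phase arm 1 has loss 0, so its weight never decreases,
  and each pull of arm 2 multiplies it by \<open>1 + \<eta> \<pi>\<^sub>2 / ((1 - \<gamma>) \<pi>\<^sub>2 + \<gamma>/2)\<close>, which is at
  least \<open>1 + \<eta>\<close> while \<open>\<pi>\<^sub>1 < 1/2\<close>. After \<open>k \<ge> 2m/\<eta>\<close> such pulls the weight \<open>\<pi>\<^sub>1 \<ge> 2\<^sup>-\<^sup>m\<close>
  has therefore either reached \<open>1/4\<close> or grown by \<open>(1 + \<eta>)\<^sup>k \<ge> exp (k\<eta>/2) \<ge> 2\<^sup>m\<close>.\<close>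

definition simplex_interior :: "nat \<Rightarrow> (nat \<Rightarrow> real) \<Rightarrow> bool" where
  "simplex_interior K p \<longleftrightarrow> (\<forall>i\<in>{1..K}. 0 < p i) \<and> (\<Sum>i = 1..K. p i) = 1"

lemma wsu_pi_Suc:
  "1 \<le> r \<Longrightarrow> wsu_pi K \<eta> \<gamma> L I (Suc r) = wsu_step K \<eta> \<gamma> L r (I r) (wsu_pi K \<eta> \<gamma> L I r)"
  unfolding wsu_pi_def by (cases r) auto

lemma wsu_lhat_bounds:
  assumes valid: "valid_params K \<eta> \<gamma>" and K: "0 < K" and p: "0 \<le> p j"
    and loss: "0 \<le> L t j" "L t j \<le> 1"
  shows "0 \<le> wsu_lhat K \<gamma> L t It p j" "\<eta> * wsu_lhat K \<gamma> L t It p j \<le> 1/2"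
proof -
  have par: "0 < \<eta>" "0 < \<gamma>" "\<gamma> < 1" "\<eta> * real K / \<gamma> \<le> 1/2"
    using valid unfolding valid_params_def by auto
  have mix_ge: "\<gamma> / real K \<le> wsu_mix K \<gamma> p j"
    using par p unfolding wsu_mix_def by simp
  have mix_pos: "0 < \<gamma> / real K" using par K by simp
  have "L t j / wsu_mix K \<gamma> p j \<le> 1 / (\<gamma> / real K)"
    using loss mix_ge mix_pos by (intro frac_le) auto
  then have "\<eta> * (L t j / wsu_mix K \<gamma> p j) \<le> \<eta> * (real K / \<gamma>)"
    using par by (intro mult_left_mono) auto
  also have "\<dots> \<le> 1/2" using par by simp
  finally show "\<eta> * wsu_lhat K \<gamma> L t It p j \<le> 1/2"
    using par unfolding wsu_lhat_def by auto
  show "0 \<le> wsu_lhat K \<gamma> L t It p j"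
    using loss mix_ge mix_pos unfolding wsu_lhat_def by auto
qed

lemma wsu_step_simplex_interior:
  assumes valid: "valid_params K \<eta> \<gamma>" and K: "0 < K" and p: "simplex_interior K p"
    and loss: "\<And>j. 0 \<le> L t j \<and> L t j \<le> 1"
  shows "simplex_interior K (wsu_step K \<eta> \<gamma> L t It p)"
proof -
  define h where "h = wsu_lhat K \<gamma> L t It p"
  define S where "S = (\<Sum>j = 1..K. p j * h j)"
  have pos: "\<And>i. i \<in> {1..K} \<Longrightarrow> 0 < p i" and sum1: "(\<Sum>i = 1..K. p i) = 1"
    using p unfolding simplex_interior_def by auto
  have h: "\<And>i. i \<in> {1..K} \<Longrightarrow> 0 \<le> h i \<and> \<eta> * h i \<le> 1/2"
    unfolding h_def using wsu_lhat_bounds[OF valid K] pos loss by (meson less_imp_le)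
  have "0 \<le> S" unfolding S_def using pos h by (intro sum_nonneg) (simp add: less_imp_le)
  moreover have "0 < \<eta>" using valid unfolding valid_params_def by simp
  ultimately have "0 \<le> \<eta> * S" by simp
  then have "1/2 \<le> 1 - \<eta> * (h i - S)" if "i \<in> {1..K}" for i
    using h[OF that] by (simp add: right_diff_distrib)
  then have "0 < p i * (1 - \<eta> * (h i - S))" if "i \<in> {1..K}" for i
    using pos[OF that] that by (intro mult_pos_pos) fastforce+
  moreover have "(\<Sum>i = 1..K. p i * (1 - \<eta> * (h i - S)))
      = (\<Sum>i = 1..K. p i) - \<eta> * S + \<eta> * S * (\<Sum>i = 1..K. p i)"
  proof -
    have "p i * (1 - \<eta> * (h i - S)) = p i - \<eta> * (p i * h i) + \<eta> * S * p i" for i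
      by (simp add: algebra_simps)
    then show ?thesis
      unfolding S_def by (simp add: sum.distrib sum_subtractf sum_distrib_left)
  qed
  ultimately show ?thesis
    using sum1 unfolding simplex_interior_def wsu_step_def h_def[symmetric] S_def[symmetric]
    by auto
qed

lemma wsu_pi_simplex_interior:
  assumes valid: "valid_params K \<eta> \<gamma>" and K: "0 < K"
    and loss: "\<And>r j. 0 \<le> L r j \<and> L r j \<le> 1"
  shows "simplex_interior K (wsu_pi K \<eta> \<gamma> L I t)"
proof -
  have "simplex_interior K (wsu_w K \<eta> \<gamma> L I n)" for n
  proof (induction n)
    case 0
    show ?case using K unfolding simplex_interior_def by simp
  next
    case (Suc n)
    then show ?case using wsu_step_simplex_interior[OF valid K _ loss] by simp
  qed
  then show ?thesis unfolding wsu_pi_def by simp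
qed

lemma wsu_step_arm1_phase2:
  assumes "L r 1 = 0" "L r 2 = 1"
  shows "wsu_step 2 \<eta> \<gamma> L r It p 1
    = (if It = 2 then p 1 * (1 + \<eta> * p 2 / wsu_mix 2 \<gamma> p 2) else p 1)"
  using assms unfolding wsu_step_def wsu_lhat_def
  by (cases "It = 1"; cases "It = 2") (simp_all add: eval_nat_numeral)

lemma phase2_factor_bounds:
  assumes valid: "valid_params 2 \<eta> \<gamma>" and p: "simplex_interior 2 p"
  shows "1 \<le> 1 + \<eta> * p 2 / wsu_mix 2 \<gamma> p 2"
    and "p 1 < 1/2 \<Longrightarrow> 1 + \<eta> \<le> 1 + \<eta> * p 2 / wsu_mix 2 \<gamma> p 2"
proof -
  have par: "0 < \<eta>" "0 < \<gamma>" "\<gamma> < 1" using valid unfolding valid_params_def by auto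
  have p2: "0 < p 2" "p 1 + p 2 = 1"
    using p unfolding simplex_interior_def by (auto simp: eval_nat_numeral)
  have mix: "0 < wsu_mix 2 \<gamma> p 2"
    using par p2 unfolding wsu_mix_def by (intro add_nonneg_pos) auto
  show "1 \<le> 1 + \<eta> * p 2 / wsu_mix 2 \<gamma> p 2" using par p2 mix by simp
  assume "p 1 < 1/2"
  then have "wsu_mix 2 \<gamma> p 2 \<le> p 2"
    using par p2 unfolding wsu_mix_def by (simp add: algebra_simps)
  then have "1 \<le> p 2 / wsu_mix 2 \<gamma> p 2" using mix by simp
  then show "1 + \<eta> \<le> 1 + \<eta> * p 2 / wsu_mix 2 \<gamma> p 2"
    using par mult_left_mono[of 1 "p 2 / wsu_mix 2 \<gamma> p 2" \<eta>] by simp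
qed

lemma wsu_pi_phase2_growth:
  fixes L :: "nat \<Rightarrow> nat \<Rightarrow> real"
  assumes valid: "valid_params 2 \<eta> \<gamma>"
    and loss: "\<And>r j. 0 \<le> L r j \<and> L r j \<le> 1"
    and phase2: "\<And>r. t \<le> r \<Longrightarrow> L r 1 = 0 \<and> L r 2 = 1"
    and t: "1 \<le> t"
  shows "min (1/4) (wsu_pi 2 \<eta> \<gamma> L I t 1 * (1 + \<eta>) ^ card {r \<in> {t..<t + n}. I r = 2})
    \<le> wsu_pi 2 \<eta> \<gamma> L I (t + n) 1"
proof (induction n)
  case 0
  show ?case by simp
next
  case (Suc n)
  define \<pi> where "\<pi> = wsu_pi 2 \<eta> \<gamma> L I (t + n)"
  define q where "q = 1 + \<eta> * \<pi> 2 / wsu_mix 2 \<gamma> \<pi> 2"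
  define c where "c = card {r \<in> {t..<t + n}. I r = 2}"
  have \<eta>: "0 < \<eta>" using valid unfolding valid_params_def by simp
  have simplex: "simplex_interior 2 \<pi>"
    unfolding \<pi>_def using wsu_pi_simplex_interior[OF valid _ loss] by simp
  have step: "wsu_pi 2 \<eta> \<gamma> L I (t + Suc n) 1 = (if I (t + n) = 2 then \<pi> 1 * q else \<pi> 1)"
    using wsu_pi_Suc[of "t + n"] wsu_step_arm1_phase2 phase2[of "t + n"] t
    unfolding \<pi>_def q_def by simp
  have count: "card {r \<in> {t..<t + Suc n}. I r = 2} = (if I (t + n) = 2 then Suc c else c)"
  proof -
    have "{r \<in> {t..<t + Suc n}. I r = 2}
        = (if I (t + n) = 2 then insert (t + n) {r \<in> {t..<t + n}. I r = 2} else {r \<in> {t..<t + n}. I r = 2})"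
      by (auto simp: less_Suc_eq)
    then show ?thesis unfolding c_def by simp
  qed
  have IH: "min (1/4) (wsu_pi 2 \<eta> \<gamma> L I t 1 * (1 + \<eta>) ^ c) \<le> \<pi> 1"
    using Suc.IH unfolding \<pi>_def c_def .
  have "0 < \<pi> 1" using simplex unfolding simplex_interior_def by simp
  show ?case
  proof (cases "I (t + n) = 2")
    case False
    then show ?thesis using IH step count by simp
  next
    case pulled: True
    show ?thesis
    proof (cases "\<pi> 1 < 1/4")
      case True
      then have "wsu_pi 2 \<eta> \<gamma> L I t 1 * (1 + \<eta>) ^ c \<le> \<pi> 1" using IH by linarith
      moreover have "1 + \<eta> \<le> q" using phase2_factor_bounds(2)[OF valid simplex] True
        unfolding q_def by simp
      ultimately have "wsu_pi 2 \<eta> \<gamma> L I t 1 * (1 + \<eta>) ^ c * (1 + \<eta>) \<le> \<pi> 1 * q"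
        using \<eta> \<open>0 < \<pi> 1\<close> by (intro mult_mono) auto
      then show ?thesis using step count pulled by (simp add: mult_ac)
    next
      case False
      have "1 \<le> q" using phase2_factor_bounds(1)[OF valid simplex] unfolding q_def .
      then have "\<pi> 1 \<le> \<pi> 1 * q" using \<open>0 < \<pi> 1\<close> by simp
      then have "1/4 \<le> \<pi> 1 * q" using False by linarith
      then show ?thesis using step pulled by (simp add: min_le_iff_disj)
    qed
  qed
qed

lemma two_pow_le_one_plus_pow:
  fixes \<eta> :: real and k m :: nat
  assumes \<eta>: "0 < \<eta>" "\<eta> \<le> 1/2" and k: "2 / \<eta> * real m \<le> real k"
  shows "2 ^ m \<le> (1 + \<eta>) ^ k"
proof -
  have "\<eta> - \<eta>\<^sup>2 \<le> ln (1 + \<eta>)" using \<eta> by (intro ln_one_plus_pos_lower_bound) auto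
  moreover have "\<eta>\<^sup>2 \<le> \<eta> / 2" using \<eta> by (simp add: power2_eq_square)
  ultimately have ln_lower: "\<eta> / 2 \<le> ln (1 + \<eta>)" by simp
  have "ln (2 ^ m) \<le> real m"
    using ln_2_less_1 mult_left_mono[of "ln 2" 1 "real m"] by (simp add: ln_realpow)
  also have "\<dots> = 2 / \<eta> * real m * (\<eta> / 2)" using \<eta> by simp
  also have "\<dots> \<le> real k * ln (1 + \<eta>)" using k ln_lower \<eta> by (intro mult_mono) auto
  also have "\<dots> = ln ((1 + \<eta>) ^ k)" using \<eta> by (simp add: ln_realpow)
  finally show ?thesis using \<eta> by simp
qed

theorem mainTheorem16:
  fixes T t m s :: nat and \<eta> \<gamma> :: real and I :: "nat \<Rightarrow> nat"
  assumes valid: "valid_params 2 \<eta> \<gamma>"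
    and T_mult: "T \<ge> 1" "100 dvd T"
    and arms: "\<And>s. s \<ge> 1 \<Longrightarrow> I s \<in> {1, 2}"
    and t_range: "T div 100 < t" "t \<le> T"
    and m_pos: "m \<ge> 1"
    and pi_lo: "(1/2) ^ m \<le> wsu_pi 2 \<eta> \<gamma> (two_phase_loss T) I t 1"
    and pi_hi: "wsu_pi 2 \<eta> \<gamma> (two_phase_loss T) I t 1 \<le> (1/2) ^ (m - 1)"
    and enough: "real (card {s \<in> {t..T}. I s = 2}) \<ge> 2 / \<eta> * real m"
    and s_kth: "s \<in> {t..T}" "I s = 2"
      "card {r \<in> {t..s}. I r = 2} = nat \<lceil>2 / \<eta> * real m\<rceil>"
  shows "wsu_pi 2 \<eta> \<gamma> (two_phase_loss T) I (s + 1) 1 \<ge> 1/4"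
proof -
  define k where "k = nat \<lceil>2 / \<eta> * real m\<rceil>"
  have \<eta>: "0 < \<eta>" "\<eta> \<le> 1/2" using valid unfolding valid_params_def by auto
  have growth: "min (1/4) (wsu_pi 2 \<eta> \<gamma> (two_phase_loss T) I t 1
        * (1 + \<eta>) ^ card {r \<in> {t..<t + (s + 1 - t)}. I r = 2})
      \<le> wsu_pi 2 \<eta> \<gamma> (two_phase_loss T) I (t + (s + 1 - t)) 1"
    using t_range by (intro wsu_pi_phase2_growth[OF valid]) (auto simp: two_phase_loss_def)
  have rounds: "t + (s + 1 - t) = s + 1" "{t..<s + 1} = {t..s}"
    using s_kth(1) by auto
  have "min (1/4) (wsu_pi 2 \<eta> \<gamma> (two_phase_loss T) I t 1 * (1 + \<eta>) ^ k)
      \<le> wsu_pi 2 \<eta> \<gamma> (two_phase_loss T) I (s + 1) 1"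
    using growth unfolding rounds s_kth(3) k_def .
  moreover have "1 \<le> (1/2) ^ m * (1 + \<eta>) ^ k"
  proof -
    have "(1/2 :: real) ^ m * 2 ^ m \<le> (1/2) ^ m * (1 + \<eta>) ^ k"
      using two_pow_le_one_plus_pow[OF \<eta>, of m k] real_nat_ceiling_ge unfolding k_def
      by (intro mult_left_mono) auto
    then show ?thesis by (simp add: power_mult_distrib[symmetric])
  qed
  moreover have "(1/2) ^ m * (1 + \<eta>) ^ k \<le> wsu_pi 2 \<eta> \<gamma> (two_phase_loss T) I t 1 * (1 + \<eta>) ^ k"
    using pi_lo \<eta> by (intro mult_right_mono) auto
  ultimately show ?thesis by simp
qed

end
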